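(* Fix $\epsilon\in(0,1)$ and let $\theta(n)=\epsilon$ for all $n$. Then for all sufficiently large $n$ and every $\rho\in[0,c]$, the quantities $$T_i=\frac{e^{\rho i}\,b^{\binom i2}\,k^2\,a!^2}{n^i\,i!\,(a-i)!^2}$$ satisfy $T_i\le n^{-c_5}$ for all $3\le i\le\lceil n/k\rceil-1$, and $T_i\le n^{1-c_5}$ for $i\in\{2,\lceil n/k\rceil\}$.
   Context: Let $p\in(0,1)$ be constant, $q=1-p$, $b=1/q$, $\log$ natural logarithm, $\gamma=2\log_b n-2\log_b\log_b n-2\log_b 2$, $\Delta=\gamma-\lfloor\gamma\rfloor$, $a=\lfloor\gamma\rfloor+1$, and $x_0=x_0(n)$ the smallest nonnegative $x$ with $(1-\Delta+x)\log_b(1-\Delta+x)+(1-\Delta)(\Delta-x)/2\le0$. Let $k=\lceil n/(\gamma-x_0-\epsilon)\rceil$. Let $c_2=-\frac{(1-\epsilon)\log(1-\epsilon)}{\epsilon}\in(0,1)$, $c=\frac{1-c_2}{2}\in(0,\frac12)$, and $c_5=\min\{\frac1{10},\frac{c}{2\log b},\frac{1-c}{2\log b}\}$. *)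

theory Defs
  imports "HOL-Analysis.Analysis"
begin

text \<open>Parameters: p in (0,1) (edge probability), eps in (0,1). q = 1 - p, b = 1/q.\<close>

definition bb :: "real \<Rightarrow> real" where
  "bb p = 1 / (1 - p)"

definition gam :: "real \<Rightarrow> nat \<Rightarrow> real" where
  "gam p n = 2 * log (bb p) (real n) - 2 * log (bb p) (log (bb p) (real n))
             - 2 * log (bb p) 2"

definition Dlt :: "real \<Rightarrow> nat \<Rightarrow> real" where
  "Dlt p n = gam p n - of_int \<lfloor>gam p n\<rfloor>"

definition aa :: "real \<Rightarrow> nat \<Rightarrow> nat" where
  "aa p n = nat (\<lfloor>gam p n\<rfloor> + 1)"

text \<open>x0(n): smallest nonnegative x with the stated inequality (the set is closed and contains Delta).\<close>
definition x0 :: "real \<Rightarrow> nat \<Rightarrow> real" where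
  "x0 p n = Inf {x. 0 \<le> x \<and>
      (1 - Dlt p n + x) * log (bb p) (1 - Dlt p n + x)
        + (1 - Dlt p n) * (Dlt p n - x) / 2 \<le> 0}"

definition kk :: "real \<Rightarrow> real \<Rightarrow> nat \<Rightarrow> int" where
  "kk p eps n = \<lceil>real n / (gam p n - x0 p n - eps)\<rceil>"

definition c2 :: "real \<Rightarrow> real" where
  "c2 eps = - ((1 - eps) * ln (1 - eps)) / eps"

definition cc :: "real \<Rightarrow> real" where
  "cc eps = (1 - c2 eps) / 2"

definition c5 :: "real \<Rightarrow> real \<Rightarrow> real" where
  "c5 p eps = min (1/10) (min (cc eps / (2 * ln (bb p))) ((1 - cc eps) / (2 * ln (bb p))))"

definition TT :: "real \<Rightarrow> real \<Rightarrow> nat \<Rightarrow> real \<Rightarrow> nat \<Rightarrow> real" where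
  "TT p eps n \<rho> i =
     exp (\<rho> * real i) * bb p ^ (i choose 2) * (real_of_int (kk p eps n))\<^sup>2 * (fact (aa p n))\<^sup>2
     / (real n ^ i * fact i * (fact (aa p n - i))\<^sup>2)"

end

theory Submission
  imports Defs "HOL-Real_Asymp.Real_Asymp"
begin

text \<open>
  Write \<open>x = ln n\<close> and \<open>t = ln b\<close>; then \<open>a \<le> 2x/t\<close> and \<open>\<lceil>n/k\<rceil>\<close> lies in \<open>[a - 3, a]\<close>.
  Since \<open>k \<le> n\<close> and \<open>a!/(a-i)! \<le> a\<^sup>i\<close>, we have
  \<open>T\<^sub>i \<le> n\<^sup>2 (e\<^sup>c a\<^sup>2 b\<^sup>(\<^sup>i\<^sup>-\<^sup>1\<^sup>)\<^sup>/\<^sup>2 / n)\<^sup>i\<close>, which is at most \<open>n\<^sup>-\<^sup>1\<^sup>/\<^sup>1\<^sup>0\<close> for \<open>i \<ge> 3\<close> as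
  long as \<open>b\<^sup>i < n a\<close> (distinguishing \<open>b\<^sup>i\<^sup>-\<^sup>1 \<le> \<surd>n\<close> from the rest).
  Beyond that point the ratio \<open>T\<^sub>i\<^sub>+\<^sub>1 / T\<^sub>i = e\<^sup>\<rho> b\<^sup>i (a-i)\<^sup>2 / (n (i+1))\<close> is at least 1, so
  only the last terms matter, and these lie within 4 of \<open>a\<close>. There Stirling's bound for \<open>a!\<close>
  gives \<open>ln T\<^sub>i \<le> x (1 - (\<gamma> - i)) - 2x(1 - \<rho>)/t + c x/t\<close>, and this exponent is at most
  \<open>-c\<^sub>5 x\<close> at \<open>i = \<lceil>n/k\<rceil> - 1\<close> and \<open>(1 - c\<^sub>5) x\<close> at \<open>i = \<lceil>n/k\<rceil>\<close>: when \<open>\<lceil>n/k\<rceil> = a\<close>, the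
  minimality of \<open>x\<^sub>0\<close> forces \<open>(1 - \<Delta>) t \<le> 2 c\<^sub>2\<close>, the monotonicity of
  \<open>u ln u / (1 - u)\<close> being what brings in \<open>c\<^sub>2\<close>.
\<close>

section \<open>Elementary estimates\<close>

lemma fact_le_fact_mult_power:
  assumes "i \<le> a" shows "(fact a :: real) \<le> fact i * real a ^ (a - i)"
proof -
  have "fact a = fact i * (fact a div fact i :: nat)"
    using fact_dvd[OF assms] by (metis dvd_mult_div_cancel)
  also have "\<dots> \<le> fact i * a ^ (a - i)" using fact_div_fact_le_pow[of "a - i" a] assms by simp
  finally show ?thesis by (metis of_nat_fact of_nat_le_iff of_nat_mult of_nat_power)
qed

lemma fact_le_exp_mult_power:
  assumes "n \<ge> 1" shows "(fact n :: real) \<le> exp 1 * real n ^ (n + 1) / exp (real n)"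
  using assms
proof (induction n rule: nat_induct_at_least)
  case base thus ?case by simp
next
  case (Suc n)
  have n: "real n \<ge> 1" using Suc.hyps by simp
  \<comment> \<open>the induction step amounts to \<open>e \<le> (1 + 1/n)^(n+1)\<close>\<close>
  have "ln (real n / (real n + 1)) \<le> real n / (real n + 1) - 1"
    using n by (intro ln_le_minus_one) auto
  then have "1 \<le> (real n + 1) * ln ((real n + 1) / real n)"
    using n by (simp add: ln_div field_simps)
  then have "exp 1 \<le> exp ((real n + 1) * ln ((real n + 1) / real n))" by simp
  also have "\<dots> = ((real n + 1) / real n) ^ (n + 1)"
  proof -
    have "(real n + 1) * ln ((real n + 1) / real n) = ln (((real n + 1) / real n) ^ (n + 1))"
      using n by (subst ln_realpow) auto
    then show ?thesis using n by simp
  qed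
  finally have "exp 1 \<le> ((real n + 1) / real n) ^ (n + 1)" .
  then have e: "exp 1 * real n ^ (n + 1) \<le> (real n + 1) ^ (n + 1)"
    using n by (simp add: power_divide field_simps)
  have "(fact (Suc n) :: real) = (real n + 1) * fact n" by simp
  also have "\<dots> \<le> (real n + 1) * (exp 1 * real n ^ (n + 1) / exp (real n))"
    using Suc.IH by (intro mult_left_mono) auto
  also have "\<dots> = (real n + 1) * exp 1 * (exp 1 * real n ^ (n + 1)) / exp (real n + 1)"
    by (simp add: exp_add field_simps)
  also have "\<dots> \<le> (real n + 1) * exp 1 * (real n + 1) ^ (n + 1) / exp (real n + 1)"
    using e by (intro divide_right_mono mult_left_mono) auto
  also have "\<dots> = exp 1 * real (Suc n) ^ (Suc n + 1) / exp (real (Suc n))"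
    by (simp add: algebra_simps)
  finally show ?case .
qed

lemma ln_fact_le:
  assumes "n \<ge> 1" shows "ln (fact n :: real) \<le> real n * ln (real n) - real n + ln (real n) + 1"
proof -
  have "ln (fact n :: real) \<le> ln (exp 1 * real n ^ (n + 1) / exp (real n))"
    using fact_le_exp_mult_power[OF assms] assms by (subst ln_le_cancel_iff) auto
  also have "\<dots> = 1 + (real n + 1) * ln (real n) - real n"
    using assms by (simp add: ln_div ln_mult ln_realpow algebra_simps)
  finally show ?thesis by (simp add: algebra_simps)
qed

lemma ln_less_minus_one:
  fixes w :: real assumes "1 < w" shows "ln w < w - 1"
proof -
  define q where "q = sqrt w"
  have q: "1 < q" "q * q = w" using assms unfolding q_def by auto
  have "ln w = 2 * ln q" using q ln_mult[of q q] by simp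
  also have "\<dots> \<le> 2 * (q - 1)" using ln_le_minus_one[of q] q by simp
  also have "\<dots> < q * q - 1" using q mult_pos_pos[of "q - 1" "q - 1"] by (simp add: algebra_simps)
  finally show ?thesis using q by simp
qed

lemma x_ln_x_div_one_minus_x_antimono:
  fixes u v :: real
  assumes "0 < u" "u \<le> v" "v < 1"
  shows "v * ln v / (1 - v) \<le> u * ln u / (1 - u)"
proof (rule DERIV_nonpos_imp_nonincreasing[OF assms(2), of "\<lambda>w. w * ln w / (1 - w)"])
  fix w assume "u \<le> w" "w \<le> v"
  then have w: "0 < w" "w < 1" using assms by auto
  have "DERIV (\<lambda>w. w * ln w / (1 - w)) w :> (ln w + 1 - w) / (1 - w)\<^sup>2"
    using w by (auto intro!: derivative_eq_intros simp: field_simps power2_eq_square)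
  moreover have "(ln w + 1 - w) / (1 - w)\<^sup>2 \<le> 0"
    using ln_le_minus_one[OF w(1)] by (simp add: divide_nonpos_nonneg)
  ultimately show "\<exists>y. DERIV (\<lambda>w. w * ln w / (1 - w)) w :> y \<and> y \<le> 0" by blast
qed

section \<open>The terms for arbitrary parameters\<close>

definition Tterm :: "real \<Rightarrow> nat \<Rightarrow> real \<Rightarrow> real \<Rightarrow> nat \<Rightarrow> real \<Rightarrow> real" where
  "Tterm \<rho> i b k a N =
     exp (\<rho> * real i) * b ^ (i choose 2) * k\<^sup>2 * (fact a)\<^sup>2 / (N ^ i * fact i * (fact (a - i))\<^sup>2)"

lemma TT_eq_Tterm: "TT p eps n \<rho> i = Tterm \<rho> i (bb p) (real_of_int (kk p eps n)) (aa p n) (real n)"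
  unfolding TT_def Tterm_def ..

lemma real_choose_two: "real (i choose 2) = real i * (real i - 1) / 2"
  by (induction i) (auto simp: numeral_2_eq_2 field_simps)

lemma power_choose_two_eq:
  assumes "b > 0" shows "b ^ (i choose 2) = (b powr ((real i - 1) / 2)) ^ i"
  using assms by (simp add: powr_realpow[symmetric] powr_powr real_choose_two field_simps)

lemma Tterm_Suc:
  assumes "i < a" "N > 0" "b > 0"
  shows "Tterm \<rho> (Suc i) b k a N
           = Tterm \<rho> i b k a N * (exp \<rho> * b ^ i * (real (a - i))\<^sup>2 / (N * (real i + 1)))"
proof -
  define r where "r = real (a - i)"
  define s where "s = real i + 1"
  have rs: "r \<noteq> 0" "s \<noteq> 0" using assms(1) unfolding r_def s_def by simp_all
  have "Suc i choose 2 = (i choose 2) + i" by (simp add: numeral_2_eq_2)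
  moreover have "(fact (a - i) :: real) = r * fact (a - Suc i)"
    using assms(1) unfolding r_def by (metis Suc_diff_Suc fact_Suc)
  moreover have "exp (\<rho> * real (Suc i)) = exp (\<rho> * real i) * exp \<rho>"
    by (simp add: exp_add[symmetric] algebra_simps)
  moreover have "(fact (Suc i) :: real) = s * fact i" unfolding s_def by simp
  ultimately show ?thesis
    using assms rs unfolding Tterm_def r_def[symmetric] s_def[symmetric]
    by (simp add: power_add field_simps power2_eq_square)
qed

lemma Tterm_le_power:
  assumes b: "b > 0" and N: "N > 0" and \<rho>: "0 \<le> \<rho>" "\<rho> \<le> c" and k: "k\<^sup>2 \<le> N\<^sup>2" and i: "i \<le> a"
  shows "Tterm \<rho> i b k a N \<le> N\<^sup>2 * (exp c * (real a)\<^sup>2 * b powr ((real i - 1) / 2) / N) ^ i"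
proof -
  define B where "B = b powr ((real i - 1) / 2)"
  have "(fact a :: real) / fact (a - i) \<le> real a ^ i"
    using fact_le_fact_mult_power[of "a - i" a] i by (simp add: divide_le_eq mult.commute)
  then have fact_quot: "(fact a)\<^sup>2 / (fact (a - i))\<^sup>2 \<le> ((real a) ^ i)\<^sup>2"
    by (metis power_divide power_mono divide_nonneg_nonneg fact_ge_zero)
  have exp_le: "exp (\<rho> * real i) \<le> exp c ^ i"
    using \<rho> by (simp add: exp_of_nat_mult[symmetric] mult.commute mult_right_mono)
  have B: "B \<ge> 0" unfolding B_def by simp
  have "Tterm \<rho> i b k a N
      = exp (\<rho> * real i) * B ^ i * k\<^sup>2 * ((fact a)\<^sup>2 / (fact (a - i))\<^sup>2) / (N ^ i * fact i)"
    unfolding Tterm_def B_def power_choose_two_eq[OF b] by (simp add: field_simps)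
  also have "\<dots> \<le> exp (\<rho> * real i) * B ^ i * k\<^sup>2 * ((fact a)\<^sup>2 / (fact (a - i))\<^sup>2) / N ^ i"
    using N B by (intro divide_left_mono) (auto simp: fact_ge_1)
  also have "\<dots> \<le> exp c ^ i * B ^ i * N\<^sup>2 * ((real a) ^ i)\<^sup>2 / N ^ i"
    using N B exp_le k fact_quot by (intro divide_right_mono mult_mono) auto
  also have "\<dots> = N\<^sup>2 * (exp c * (real a)\<^sup>2 * B / N) ^ i"
    by (simp add: power_mult_distrib power_divide field_simps power_mult[symmetric] mult.commute)
  finally show ?thesis unfolding B_def .
qed

lemma Tterm_le_exp:
  assumes b: "b > 0" and N: "N > 0" and \<rho>: "0 \<le> \<rho>" and k: "k\<^sup>2 \<le> N\<^sup>2" and i: "i \<le> a" and a: "1 \<le> a"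
  shows "Tterm \<rho> i b k a N \<le> exp (\<rho> * real i + ln b * (real i * (real i - 1) / 2) + 2 * ln N
           + ln (fact a) + real (a - i) * ln (real a) - real i * ln N)"
proof -
  have "(fact a)\<^sup>2 / (fact i * (fact (a - i))\<^sup>2) \<le> (fact a :: real)\<^sup>2 / fact i"
    by (intro divide_left_mono) (auto simp: fact_ge_1 one_le_power)
  also have "\<dots> = fact a * (fact a / fact i)" by (simp add: power2_eq_square)
  also have "\<dots> \<le> fact a * real a ^ (a - i)"
    using fact_le_fact_mult_power[OF i] by (intro mult_left_mono) (auto simp: divide_le_eq mult.commute)
  finally have fact_quot: "(fact a)\<^sup>2 / (fact i * (fact (a - i))\<^sup>2) \<le> fact a * real a ^ (a - i)" .
  have "Tterm \<rho> i b k a N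
      = exp (\<rho> * real i) * b ^ (i choose 2) * k\<^sup>2 * ((fact a)\<^sup>2 / (fact i * (fact (a - i))\<^sup>2)) / N ^ i"
    unfolding Tterm_def by (simp add: field_simps)
  also have "\<dots> \<le> exp (\<rho> * real i) * b ^ (i choose 2) * N\<^sup>2 * (fact a * real a ^ (a - i)) / N ^ i"
    using N k fact_quot b by (intro divide_right_mono mult_mono) auto
  also have "\<dots> = exp (\<rho> * real i + ln b * (real i * (real i - 1) / 2) + 2 * ln N
      + ln (fact a) + real (a - i) * ln (real a) - real i * ln N)"
  proof -
    have "b ^ (i choose 2) = exp (ln b * (real i * (real i - 1) / 2))"
      using b by (simp add: powr_realpow[symmetric] powr_def real_choose_two mult.commute)
    moreover have "N\<^sup>2 = exp (2 * ln N)" using N by (simp add: exp_double)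
    moreover have "real a ^ (a - i) = exp (real (a - i) * ln (real a))"
      using a by (subst exp_of_nat_mult) simp
    moreover have "N ^ i = exp (real i * ln N)" using N by (subst exp_of_nat_mult) simp
    ultimately show ?thesis by (simp add: exp_add exp_diff)
  qed
  finally show ?thesis .
qed

text \<open>The exponent estimate behind \<open>TT_near_top\<close>, with \<open>g = \<gamma>\<close>, \<open>D = \<Delta>\<close>, \<open>l = ln Q\<close>,
  \<open>r = \<rho>\<close> and \<open>m = a - i\<close>; the hypothesis on \<open>x\<close> is \<open>gam_eq\<close>.\<close>
lemma near_top_log_bound:
  fixes g l D m r t x a i :: real
  assumes t: "t > 0" and x: "x = (t * g + 2 * l) / 2" and a: "a = g + 1 - D" and i: "i = a - m"
    and D: "0 \<le> D" "D < 1" and m: "0 \<le> m" "m \<le> 4" and r: "0 \<le> r" "r \<le> 1/2" and l: "l \<ge> 0"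
  shows "r * i + t * (i * (i - 1) / 2) + 2 * x + (a + m + 1) * l - a + 1 - i * x
           \<le> x * (1 - (g - i)) - 2 * x * (1 - r) / t + (l * (14 + 4 / t) + 2 + 10 * t)"
proof -
  define y where "y = D + m - 1"
  have y: "-1 \<le> y" "y \<le> 4" unfolding y_def using D m by auto
  have "x * (1 - (g - i)) - 2 * x * (1 - r) / t + (l * (14 + 4 / t) + 2 + 10 * t)
          - (r * i + t * (i * (i - 1) / 2) + 2 * x + (a + m + 1) * l - a + 1 - i * x)
        = l * ((1 - y) - 2 * (1 - r) / t + 14 + 4 / t - 2 * m - 3)
          + (2 + 10 * t + r * y - y * t * (y + 1) / 2 - D)"
    unfolding i x a y_def using t by (simp add: field_simps)
  moreover have "2 * (1 - r) / t \<le> 4 / t" using r t by (simp add: divide_right_mono)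
  then have "l * ((1 - y) - 2 * (1 - r) / t + 14 + 4 / t - 2 * m - 3) \<ge> 0"
    using l m y by (intro mult_nonneg_nonneg) auto
  moreover have "y * (y + 1) * t \<le> 20 * t"
    using y t mult_right_mono[of y 4 "y + 1"] by (intro mult_right_mono) auto
  then have "y * t * (y + 1) / 2 \<le> 10 * t" by (simp add: algebra_simps)
  moreover have "- r \<le> r * y" using r mult_left_mono[of "-1" y r] y by simp
  ultimately show ?thesis using D r by linarith
qed

section \<open>Estimates for one large \<open>n\<close>\<close>

lemma cc_bounds:
  assumes "0 < eps" "eps < 1"
  shows "0 < cc eps" "cc eps < 1/2" "c2 eps = 1 - 2 * cc eps"
proof -
  have "(1 - eps) * ln (1 - eps) < 0" using assms by (simp add: mult_pos_neg)
  then have "c2 eps > 0" unfolding c2_def using assms by (simp add: divide_neg_pos)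
  moreover have "- ln (1 - eps) < eps / (1 - eps)"
    using ln_less_minus_one[of "1 / (1 - eps)"] assms by (simp add: ln_div field_simps)
  then have "c2 eps < 1" unfolding c2_def using assms by (simp add: field_simps)
  ultimately show "0 < cc eps" "cc eps < 1/2" "c2 eps = 1 - 2 * cc eps"
    unfolding cc_def by (auto simp: field_simps)
qed

lemma bb_gt_one: "0 < p \<Longrightarrow> p < 1 \<Longrightarrow> 1 < bb p"
  unfolding bb_def by simp

locale large_n =
  fixes p eps :: real and n :: nat and t x c Q k :: real and imax :: int
  assumes p: "0 < p" "p < 1" and eps: "0 < eps" "eps < 1" and n_pos: "0 < n"
  defines "t \<equiv> ln (bb p)" and "x \<equiv> ln (real n)" and "c \<equiv> cc eps" and "Q \<equiv> 2 * x / t"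
    and "k \<equiv> real_of_int (kk p eps n)" and "imax \<equiv> \<lceil>real n / k\<rceil>"
  assumes Q_ge_one: "1 \<le> Q"
    and t_le_two_ln_Q: "t \<le> 2 * ln Q"
    and ln_Q_le: "ln Q \<le> x / 2"
    and x_ge: "20 * t \<le> x"
    and Q_sq_less: "Q\<^sup>2 < real n"
    and cond_small: "exp (3 * c) * Q ^ 6 \<le> exp (3 / 20 * x)"
    and cond_small_ratio: "exp c * Q\<^sup>2 \<le> exp (3 / 4 * x)"
    and cond_mid_ratio: "exp c * Q ^ 3 \<le> exp (1 / 4 * x)"
    and cond_two: "exp (2 * c) * Q ^ 4 * bb p \<le> exp (9 / 10 * x)"
    and cond_stirling: "ln Q * (14 + 4 / t) + 2 + 10 * t \<le> c / t * x"
begin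

lemma b_gt_one: "1 < bb p" using bb_gt_one[OF p] .
lemma t_pos: "0 < t" unfolding t_def using b_gt_one by simp
lemma c_bounds: "0 < c" "c < 1/2" "c2 eps = 1 - 2 * c" unfolding c_def using cc_bounds[OF eps] by auto
lemma x_pos: "0 < x" using x_ge t_pos by simp
lemma n_eq_exp: "real n = exp x" unfolding x_def using n_pos by simp
lemma n_powr: "real n powr z = exp (z * x)" unfolding x_def using n_pos by (simp add: powr_def)
lemma ln_Q_nonneg: "0 \<le> ln Q" using Q_ge_one by simp

lemma gam_eq: "gam p n = (2 * x - 2 * ln Q) / t"
proof -
  have "ln Q = ln 2 + ln (x / t)" unfolding Q_def using x_pos t_pos ln_mult[of 2 "x / t"] by simp
  then show ?thesis
    unfolding gam_def log_def t_def[symmetric] x_def[symmetric] using t_pos by (simp add: field_simps)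
qed

lemma gam_bounds: "x / t \<le> gam p n" "gam p n + 1 \<le> Q" "20 \<le> gam p n"
proof -
  show x_le: "x / t \<le> gam p n" unfolding gam_eq using ln_Q_le t_pos by (simp add: field_simps)
  have "Q * t = 2 * x" unfolding Q_def using t_pos by simp
  then have "(gam p n + 1) * t \<le> Q * t" unfolding gam_eq using t_le_two_ln_Q t_pos by (simp add: field_simps)
  then show "gam p n + 1 \<le> Q" using t_pos by simp
  have "x \<le> t * gam p n" using x_le t_pos by (simp add: field_simps)
  then have "t * 20 \<le> t * gam p n" using x_ge by linarith
  then show "20 \<le> gam p n" using t_pos by simp
qed

lemma Dlt_bounds: "0 \<le> Dlt p n" "Dlt p n < 1"
  unfolding Dlt_def by linarith+

lemma int_aa: "int (aa p n) = \<lfloor>gam p n\<rfloor> + 1"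
  using gam_bounds(3) unfolding aa_def by simp

lemma aa_eq: "real (aa p n) = gam p n - Dlt p n + 1"
proof -
  have "real (aa p n) = real_of_int (\<lfloor>gam p n\<rfloor> + 1)" by (metis int_aa of_int_of_nat_eq)
  then show ?thesis unfolding Dlt_def by simp
qed

lemma aa_bounds: "gam p n \<le> real (aa p n)" "real (aa p n) \<le> Q" "21 \<le> aa p n"
  using aa_eq Dlt_bounds gam_bounds by auto

definition x0_set :: "real set" where
  "x0_set = {z. 0 \<le> z \<and> (1 - Dlt p n + z) * log (bb p) (1 - Dlt p n + z)
                              + (1 - Dlt p n) * (Dlt p n - z) / 2 \<le> 0}"

lemma x0_eq_Inf: "x0 p n = Inf x0_set" unfolding x0_def x0_set_def ..

lemma Dlt_mem_x0_set: "Dlt p n \<in> x0_set" unfolding x0_set_def using Dlt_bounds by simp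

lemma x0_bounds: "0 \<le> x0 p n" "x0 p n \<le> Dlt p n"
proof -
  have "bdd_below x0_set" unfolding x0_set_def by (rule bdd_belowI[of _ 0]) auto
  then show "x0 p n \<le> Dlt p n" unfolding x0_eq_Inf by (rule cInf_lower[OF Dlt_mem_x0_set])
  show "0 \<le> x0 p n" unfolding x0_eq_Inf using Dlt_mem_x0_set by (intro cInf_greatest) (auto simp: x0_set_def)
qed

definition denom :: real where "denom = gam p n - x0 p n - eps"

lemma denom_bounds: "gam p n - 2 < denom" "denom < gam p n" "18 \<le> denom" "denom \<le> Q"
  unfolding denom_def using x0_bounds Dlt_bounds eps gam_bounds by auto

lemma k_eq: "k = real_of_int \<lceil>real n / denom\<rceil>"
  unfolding k_def kk_def denom_def ..

lemma k_bounds: "real n / denom \<le> k" "k < real n / denom + 1" "0 < k" "k\<^sup>2 \<le> (real n)\<^sup>2"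
proof -
  show k_ge: "real n / denom \<le> k" unfolding k_eq by simp
  show k_less: "k < real n / denom + 1" unfolding k_eq by linarith
  show k_pos: "0 < k" using k_ge denom_bounds n_pos by (smt (verit) divide_pos_pos of_nat_0_less_iff)
  have "40 ^ 2 \<le> Q\<^sup>2" unfolding Q_def using x_ge t_pos by (intro power_mono) (auto simp: field_simps)
  then have "2 \<le> real n" using Q_sq_less by simp
  moreover have "real n / denom \<le> real n / 2" using denom_bounds n_pos by (intro divide_left_mono) auto
  ultimately have "k \<le> real n" using k_less by linarith
  then show "k\<^sup>2 \<le> (real n)\<^sup>2" using k_pos by (intro power_mono) auto
qed

lemma n_div_k_le: "real n / k \<le> denom"
  using k_bounds(1,3) denom_bounds by (simp add: field_simps)

lemma n_div_k_gt: "denom - 1 < real n / k"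
proof -
  have d: "0 < denom" using denom_bounds by simp
  have "denom * denom \<le> Q * Q" using denom_bounds d by (intro mult_mono) auto
  then have "denom - 1 \<le> real n * denom / (real n + denom)"
    using Q_sq_less d n_pos by (simp add: field_simps power2_eq_square)
  also have "\<dots> = real n / ((real n + denom) / denom)" by simp
  also have "\<dots> < real n / k"
  proof -
    have "k < (real n + denom) / denom" using k_bounds(2) d by (simp add: field_simps)
    then show ?thesis using k_bounds(3) d n_pos by (intro divide_strict_left_mono) auto
  qed
  finally show ?thesis .
qed

lemma imax_le: "imax \<le> int (aa p n)"
proof -
  have "real n / k \<le> real_of_int (\<lfloor>gam p n\<rfloor> + 1)"
    using n_div_k_le denom_bounds(2) by linarith
  then show ?thesis unfolding imax_def int_aa by (rule ceiling_le)
qed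

lemma imax_ge: "int (aa p n) - 3 \<le> imax"
proof -
  have "real_of_int (\<lfloor>gam p n\<rfloor> - 3) < real n / k"
    using n_div_k_gt denom_bounds(1) by linarith
  then show ?thesis unfolding imax_def int_aa by linarith
qed

lemma imax_ge_18: "18 \<le> imax" using imax_ge aa_bounds by linarith

text \<open>The only place where the minimality of \<open>x\<^sub>0\<close> is used.\<close>
lemma one_minus_Dlt_le:
  assumes "imax = int (aa p n)"
  shows "(1 - Dlt p n) * t \<le> 2 * (1 - 2 * c)"
proof -
  have "\<lfloor>gam p n\<rfloor> + 1 \<le> \<lceil>real n / k\<rceil>" using assms unfolding imax_def int_aa by simp
  then have "real_of_int \<lfloor>gam p n\<rfloor> < real n / k" by (simp add: le_ceiling_iff)
  then have "x0 p n < Dlt p n - eps"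
    using n_div_k_le unfolding denom_def Dlt_def by linarith
  then obtain s where s: "s \<in> x0_set" "s < Dlt p n - eps"
    using cInf_lessD[of x0_set] Dlt_mem_x0_set unfolding x0_eq_Inf by blast
  define D where "D = Dlt p n"
  define u where "u = 1 - D + s"
  have D: "0 \<le> D" "D < 1" using Dlt_bounds unfolding D_def by auto
  have "u * (ln u / t) + (1 - D) * (1 - u) / 2 \<le> 0" and u: "0 < u" "u \<le> 1 - eps"
    using s D unfolding x0_set_def u_def D_def log_def t_def by auto
  then have "u * ln u / (1 - u) \<le> - (t * (1 - D) / 2)"
    using t_pos eps by (simp add: field_simps)
  moreover have "(1 - eps) * ln (1 - eps) / (1 - (1 - eps)) \<le> u * ln u / (1 - u)"
    using u eps by (intro x_ln_x_div_one_minus_x_antimono) auto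
  ultimately have "t * (1 - D) \<le> 2 * c2 eps" unfolding c2_def by simp
  then show ?thesis using c_bounds unfolding D_def by (simp add: mult.commute)
qed

lemma c5_bounds: "c5 p eps \<le> 1/10" "t * c5 p eps \<le> c / 2"
proof -
  show "c5 p eps \<le> 1/10" unfolding c5_def by simp
  have "c5 p eps \<le> c / (2 * t)" unfolding c5_def c_def t_def by simp
  then show "t * c5 p eps \<le> c / 2" using t_pos by (simp add: field_simps)
qed

lemma near_top_exponent_le:
  assumes "0 \<le> \<rho>" "\<rho> \<le> c"
  shows "x * (1 - (gam p n - real_of_int imax)) - 2 * x * (1 - \<rho>) / t
           \<le> x * (1 - c5 p eps) - c / t * x"
proof -
  define y where "y = gam p n - real_of_int imax"
  have "t * c5 p eps + c - 2 * (1 - \<rho>) \<le> t * y"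
  proof (cases "imax = int (aa p n)")
    case True
    then have "t * y = - ((1 - Dlt p n) * t)"
      unfolding y_def Dlt_def using int_aa by (simp add: algebra_simps)
    then have "- (2 * (1 - 2 * c)) \<le> t * y" using one_minus_Dlt_le[OF True] by linarith
    then show ?thesis using c5_bounds(2) c_bounds(1) assms by argo
  next
    case False
    then have "imax \<le> \<lfloor>gam p n\<rfloor>" using imax_le int_aa by simp
    then have "0 \<le> y" unfolding y_def by (simp add: le_floor_iff)
    then have "0 \<le> t * y" using t_pos by simp
    then show ?thesis using c5_bounds(2) assms c_bounds(1,2) by argo
  qed
  then have "(t * c5 p eps + c - 2 * (1 - \<rho>)) / t \<le> y"
    using t_pos by (simp add: divide_le_eq mult.commute)
  also have "(t * c5 p eps + c - 2 * (1 - \<rho>)) / t = c5 p eps + c / t - 2 * (1 - \<rho>) / t"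
    using t_pos by (simp add: field_simps)
  finally have "x * (c5 p eps + c / t - 2 * (1 - \<rho>) / t) \<le> x * y"
    using x_pos by (intro mult_left_mono) auto
  then have "x * c5 p eps + c / t * x - 2 * x * (1 - \<rho>) / t \<le> x * y"
    by (simp add: algebra_simps)
  then show ?thesis unfolding y_def[symmetric] by (simp add: algebra_simps)
qed

lemma TT_eq: "TT p eps n \<rho> i = Tterm \<rho> i (bb p) k (aa p n) (real n)"
  unfolding TT_eq_Tterm k_def ..

lemma TT_nonneg: "0 \<le> TT p eps n \<rho> i"
  unfolding TT_def using b_gt_one by simp

text \<open>Near the top, Stirling's bound on \<open>a!\<close> is needed; the error terms are absorbed by \<open>c x / t\<close>.\<close>
lemma TT_near_top:
  assumes \<rho>: "0 \<le> \<rho>" "\<rho> \<le> c" and i: "i \<le> aa p n" "aa p n \<le> i + 4"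
  shows "TT p eps n \<rho> i \<le> exp (x * (1 - (gam p n - real i)) - 2 * x * (1 - \<rho>) / t + c / t * x)"
proof -
  define a where "a = aa p n"
  have a: "1 \<le> a" "real a \<le> Q" using aa_bounds unfolding a_def by auto
  have m: "real (a - i) = real a - real i" "0 \<le> real a - real i" "real a - real i \<le> 4"
    using i unfolding a_def by auto
  have ln_a: "0 \<le> ln (real a)" "ln (real a) \<le> ln Q" using a by auto
  have "TT p eps n \<rho> i \<le> exp (\<rho> * real i + t * (real i * (real i - 1) / 2) + 2 * x
      + ln (fact a) + real (a - i) * ln (real a) - real i * x)"
    unfolding TT_eq a_def[symmetric] t_def x_def
    by (rule Tterm_le_exp) (use b_gt_one n_pos \<rho> k_bounds i a in \<open>auto simp: a_def\<close>)
  also have "\<dots> \<le> exp (\<rho> * real i + t * (real i * (real i - 1) / 2) + 2 * x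
      + (real a + (real a - real i) + 1) * ln Q - real a + 1 - real i * x)"
  proof -
    have "real a * ln (real a) \<le> real a * ln Q" using ln_a by (intro mult_left_mono) auto
    moreover have "(real a - real i) * ln (real a) \<le> (real a - real i) * ln Q"
      using ln_a m by (intro mult_left_mono) auto
    moreover have "ln (fact a) \<le> real a * ln (real a) - real a + ln (real a) + 1"
      using ln_fact_le a by simp
    ultimately have "ln (fact a) + real (a - i) * ln (real a)
        \<le> (real a + (real a - real i) + 1) * ln Q - real a + 1"
      using ln_a unfolding m(1) by (simp add: algebra_simps)
    then show ?thesis by simp
  qed
  also have "\<dots> \<le> exp (x * (1 - (gam p n - real i)) - 2 * x * (1 - \<rho>) / t
      + (ln Q * (14 + 4 / t) + 2 + 10 * t))"
    by (intro exp_mono near_top_log_bound[where D = "Dlt p n"])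
       (use t_pos \<rho> c_bounds m ln_Q_nonneg Dlt_bounds in \<open>auto simp: gam_eq aa_eq[folded a_def] field_simps\<close>)
  also have "\<dots> \<le> exp (x * (1 - (gam p n - real i)) - 2 * x * (1 - \<rho>) / t + c / t * x)"
    using cond_stirling by simp
  finally show ?thesis .
qed

lemma TT_le_power:
  assumes "0 \<le> \<rho>" "\<rho> \<le> c" "i \<le> aa p n"
  shows "TT p eps n \<rho> i \<le> (real n)\<^sup>2 * (exp c * (real (aa p n))\<^sup>2 * exp (t * (real i - 1) / 2) / real n) ^ i"
proof -
  have "bb p powr ((real i - 1) / 2) = exp (t * (real i - 1) / 2)"
    using b_gt_one unfolding t_def powr_def by simp
  then show ?thesis
    unfolding TT_eq using Tterm_le_power[of "bb p" "real n" \<rho> c k i "aa p n"] assms b_gt_one n_pos k_bounds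
    by simp
qed

lemma exp_neg_tenth_le: "exp (- x / 10) \<le> real n powr (- c5 p eps)"
  unfolding n_powr using c5_bounds x_pos by (simp add: mult_right_mono)

lemma TT_small_i:
  assumes \<rho>: "0 \<le> \<rho>" "\<rho> \<le> c" and i: "3 \<le> i" "i \<le> aa p n" and ti: "t * (real i - 1) \<le> x / 2"
  shows "TT p eps n \<rho> i \<le> real n powr (- c5 p eps)"
proof -
  define \<beta> where "\<beta> = exp c * (real (aa p n))\<^sup>2 * exp (t * (real i - 1) / 2) / real n"
  define M where "M = exp c * Q\<^sup>2 * exp (- (3/4) * x)"
  have \<beta>: "0 \<le> \<beta>" unfolding \<beta>_def by simp
  have "\<beta> \<le> exp c * Q\<^sup>2 * exp (x / 4) / real n"
    unfolding \<beta>_def using ti aa_bounds n_pos by (intro divide_right_mono mult_mono power_mono) auto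
  also have "\<dots> = M" unfolding M_def n_eq_exp by (simp add: exp_diff[symmetric] exp_add[symmetric] field_simps)
  finally have \<beta>_le: "\<beta> \<le> M" .
  have M_le: "M \<le> 1" using cond_small_ratio unfolding M_def by (simp add: exp_minus field_simps)
  have "TT p eps n \<rho> i \<le> (real n)\<^sup>2 * \<beta> ^ i" unfolding \<beta>_def by (rule TT_le_power[OF \<rho> i(2)])
  also have "\<dots> \<le> (real n)\<^sup>2 * \<beta> ^ 3"
    using \<beta> \<beta>_le M_le i by (intro mult_left_mono power_decreasing) auto
  also have "\<dots> \<le> (real n)\<^sup>2 * M ^ 3" using \<beta> \<beta>_le by (intro mult_left_mono power_mono) auto
  also have "\<dots> = exp (3 * c) * Q ^ 6 * exp (- x / 4)"
    unfolding M_def n_eq_exp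
    by (simp add: power_mult_distrib exp_of_nat_mult[symmetric] power_mult[symmetric]
                  exp_add[symmetric] mult_ac)
  also have "\<dots> \<le> exp (3 / 20 * x) * exp (- x / 4)" using cond_small by simp
  also have "\<dots> = exp (- x / 10)" by (simp add: exp_add[symmetric])
  also have "\<dots> \<le> real n powr (- c5 p eps)" by (rule exp_neg_tenth_le)
  finally show ?thesis .
qed

lemma TT_mid_i:
  assumes \<rho>: "0 \<le> \<rho>" "\<rho> \<le> c" and i: "i \<le> aa p n"
    and ti: "x / 2 < t * (real i - 1)" "t * real i < x + ln (real (aa p n))"
  shows "TT p eps n \<rho> i \<le> real n powr (- c5 p eps)"
proof -
  define a where "a = real (aa p n)"
  have a: "1 \<le> a" "a \<le> Q" using aa_bounds unfolding a_def by auto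
  define \<beta> where "\<beta> = exp c * a\<^sup>2 * exp (t * (real i - 1) / 2) / real n"
  define M where "M = exp (- x / 4)"
  have \<beta>: "0 \<le> \<beta>" unfolding \<beta>_def by simp
  have "exp (t * (real i - 1) / 2) \<le> exp (x / 2 + ln a)"
    using ti t_pos ln_ge_zero[OF a(1)] unfolding a_def by (simp add: algebra_simps)
  also have "\<dots> = exp (x / 2) * a" using a by (simp add: exp_add)
  finally have "\<beta> \<le> exp c * a\<^sup>2 * (exp (x / 2) * a) / real n"
    unfolding \<beta>_def using n_pos by (intro divide_right_mono mult_left_mono) auto
  also have "\<dots> = exp c * a ^ 3 * exp (- x / 2)" unfolding n_eq_exp
    by (simp add: exp_minus field_simps power2_eq_square power3_eq_cube exp_double[symmetric] exp_add[symmetric])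
  also have "\<dots> \<le> exp c * Q ^ 3 * exp (- x / 2)" using a by (intro mult_right_mono mult_left_mono power_mono) auto
  also have "\<dots> \<le> exp (1 / 4 * x) * exp (- x / 2)" using cond_mid_ratio by simp
  also have "\<dots> = M" unfolding M_def by (simp add: exp_add[symmetric])
  finally have \<beta>_le: "\<beta> \<le> M" .
  have M_le: "M \<le> 1" unfolding M_def using x_pos by simp
  have "t * 10 < t * (real i - 1)" using ti x_ge by linarith
  then have i_ge: "11 \<le> i" using t_pos by simp
  have "TT p eps n \<rho> i \<le> (real n)\<^sup>2 * \<beta> ^ i" unfolding \<beta>_def a_def by (rule TT_le_power[OF \<rho> i])
  also have "\<dots> \<le> (real n)\<^sup>2 * M ^ i" using \<beta> \<beta>_le by (intro mult_left_mono power_mono) auto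
  also have "\<dots> \<le> (real n)\<^sup>2 * M ^ 11" using M_le i_ge by (intro mult_left_mono power_decreasing) (auto simp: M_def)
  also have "\<dots> = exp (- (3/4) * x)"
    unfolding M_def n_eq_exp by (simp add: exp_of_nat_mult[symmetric] exp_add[symmetric])
  also have "\<dots> \<le> exp (- x / 10)" using x_pos by simp
  also have "\<dots> \<le> real n powr (- c5 p eps)" by (rule exp_neg_tenth_le)
  finally show ?thesis .
qed

lemma TT_two:
  assumes \<rho>: "0 \<le> \<rho>" "\<rho> \<le> c"
  shows "TT p eps n \<rho> 2 \<le> real n powr (1 - c5 p eps)"
proof -
  have "TT p eps n \<rho> 2 \<le> (real n)\<^sup>2 * (exp c * (real (aa p n))\<^sup>2 * exp (t * (real 2 - 1) / 2) / real n) ^ 2"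
    using aa_bounds by (intro TT_le_power[OF \<rho>]) auto
  also have "\<dots> = exp (2 * c) * real (aa p n) ^ 4 * bb p"
  proof -
    have "exp (t / 2) ^ 2 = bb p" using b_gt_one unfolding t_def by (simp add: exp_double[symmetric])
    then show ?thesis using n_pos by (simp add: power_mult_distrib power_divide exp_double[symmetric] field_simps)
  qed
  also have "\<dots> \<le> exp (2 * c) * Q ^ 4 * bb p"
    using aa_bounds b_gt_one by (intro mult_right_mono mult_left_mono power_mono) auto
  also have "\<dots> \<le> exp (9 / 10 * x)" by (rule cond_two)
  also have "\<dots> \<le> real n powr (1 - c5 p eps)"
    unfolding n_powr using c5_bounds x_pos by (simp add: mult_right_mono)
  finally show ?thesis .
qed

lemma TT_Suc_ge:
  assumes \<rho>: "0 \<le> \<rho>" and j: "j < aa p n" and tj: "x + ln (real (aa p n)) \<le> t * real j"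
  shows "TT p eps n \<rho> j \<le> TT p eps n \<rho> (Suc j)"
proof -
  define a where "a = aa p n"
  have a: "1 \<le> real a" using aa_bounds unfolding a_def by simp
  define R where "R = exp \<rho> * bb p ^ j * (real (a - j))\<^sup>2 / (real n * (real j + 1))"
  have "TT p eps n \<rho> (Suc j) = TT p eps n \<rho> j * R"
    unfolding TT_eq R_def a_def by (rule Tterm_Suc) (use j n_pos b_gt_one in auto)
  moreover have "1 \<le> R"
  proof -
    have "bb p ^ j = exp (t * real j)"
      using b_gt_one unfolding t_def by (subst mult.commute, subst exp_of_nat_mult) simp
    moreover have "exp (x + ln (real a)) \<le> exp (t * real j)" using tj unfolding a_def by simp
    ultimately have "real n * real a \<le> bb p ^ j" unfolding n_eq_exp using a by (simp add: exp_add)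
    moreover have "real n * (real j + 1) \<le> real n * real a"
      using j unfolding a_def by (intro mult_left_mono) auto
    moreover have "1 * 1 \<le> exp \<rho> * (real (a - j))\<^sup>2"
      using \<rho> j unfolding a_def by (intro mult_mono) (auto simp: one_le_power)
    ultimately have "real n * (real j + 1) \<le> exp \<rho> * (real (a - j))\<^sup>2 * bb p ^ j"
      using b_gt_one by (smt (verit) mult_le_cancel_right1 zero_le_power)
    then show ?thesis
      unfolding R_def by (subst le_divide_eq_1_pos) (use n_pos in \<open>simp_all add: mult_ac\<close>)
  qed
  ultimately show ?thesis using TT_nonneg[of \<rho> j] by (simp add: mult_le_cancel_left1)
qed

lemma TT_near_imax:
  assumes \<rho>: "0 \<le> \<rho>" "\<rho> \<le> c" and i: "int i \<le> imax" "imax \<le> int i + 1"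
  shows "TT p eps n \<rho> i \<le> real n powr (1 - c5 p eps - real_of_int (imax - int i))"
proof -
  have "TT p eps n \<rho> i \<le> exp (x * (1 - (gam p n - real i)) - 2 * x * (1 - \<rho>) / t + c / t * x)"
    using i imax_le imax_ge by (intro TT_near_top[OF \<rho>]) linarith+
  also have "\<dots> \<le> exp ((1 - c5 p eps - real_of_int (imax - int i)) * x)"
    using near_top_exponent_le[OF \<rho>] by (simp add: algebra_simps)
  also have "\<dots> = real n powr (1 - c5 p eps - real_of_int (imax - int i))" by (simp add: n_powr)
  finally show ?thesis .
qed

lemma TT_below_imax:
  assumes \<rho>: "0 \<le> \<rho>" "\<rho> \<le> c" and i: "3 \<le> i" "int i \<le> imax - 1"
  shows "TT p eps n \<rho> i \<le> real n powr (- c5 p eps)"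
proof -
  have i_le: "i \<le> aa p n" using i imax_le by linarith
  consider "t * (real i - 1) \<le> x / 2"
    | "x / 2 < t * (real i - 1)" "t * real i < x + ln (real (aa p n))"
    | "x + ln (real (aa p n)) \<le> t * real i"
    by linarith
  then show ?thesis
  proof cases
    case 1
    then show ?thesis using TT_small_i[OF \<rho> i(1) i_le] by simp
  next
    case 2
    then show ?thesis using TT_mid_i[OF \<rho> i_le] by simp
  next
    case 3
    have "TT p eps n \<rho> i \<le> TT p eps n \<rho> (nat (imax - 1))"
    proof (rule lift_Suc_mono_le_ivl[where N = "{i..<nat (imax - 1)}"])
      fix j assume "j \<in> {i..<nat (imax - 1)}"
      moreover have "t * real i \<le> t * real j" if "i \<le> j" using that t_pos by simp
      ultimately show "TT p eps n \<rho> j \<le> TT p eps n \<rho> (Suc j)"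
        using 3 imax_le by (intro TT_Suc_ge[OF \<rho>(1)]) auto
    qed (use i in auto)
    also have "\<dots> \<le> real n powr (- c5 p eps)"
      using TT_near_imax[OF \<rho>, of "nat (imax - 1)"] imax_ge_18 by simp
    finally show ?thesis .
  qed
qed

lemma TT_bounds:
  "\<forall>\<rho>. 0 \<le> \<rho> \<and> \<rho> \<le> cc eps \<longrightarrow>
     (\<forall>i::nat. 3 \<le> i \<and> int i \<le> \<lceil>real n / real_of_int (kk p eps n)\<rceil> - 1 \<longrightarrow>
        TT p eps n \<rho> i \<le> real n powr (- c5 p eps)) \<and>
     (\<forall>i::nat. (i = 2 \<or> int i = \<lceil>real n / real_of_int (kk p eps n)\<rceil>) \<longrightarrow>
        TT p eps n \<rho> i \<le> real n powr (1 - c5 p eps))"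
proof (intro allI impI conjI)
  fix \<rho> i assume "0 \<le> \<rho> \<and> \<rho> \<le> cc eps"
  then have \<rho>: "0 \<le> \<rho>" "\<rho> \<le> c" unfolding c_def by auto
  show "TT p eps n \<rho> i \<le> real n powr (- c5 p eps)"
    if "3 \<le> i \<and> int i \<le> \<lceil>real n / real_of_int (kk p eps n)\<rceil> - 1"
    using that TT_below_imax[OF \<rho>] unfolding imax_def k_def by auto
  show "TT p eps n \<rho> i \<le> real n powr (1 - c5 p eps)"
    if "i = 2 \<or> int i = \<lceil>real n / real_of_int (kk p eps n)\<rceil>"
  proof -
    from that have "i = 2 \<or> i = nat imax" unfolding imax_def k_def by auto
    then show ?thesis using TT_two[OF \<rho>] TT_near_imax[OF \<rho>, of "nat imax"] imax_ge_18 by auto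
  qed
qed

end

lemma eventually_large_n:
  assumes "0 < p" "p < 1" "0 < eps" "eps < 1"
  shows "\<forall>\<^sub>F n in sequentially. large_n p eps n"
proof -
  have "0 < ln (bb p)" "0 < cc eps" "0 < bb p"
    using bb_gt_one[OF assms(1,2)] cc_bounds[OF assms(3,4)] by auto
  then show ?thesis
    unfolding large_n_def using assms by (intro eventually_conj; real_asymp)
qed

theorem lemma10:
  fixes p eps :: real
  assumes "0 < p" "p < 1" "0 < eps" "eps < 1"
  shows "\<forall>\<^sub>F n in sequentially. \<forall>\<rho>. 0 \<le> \<rho> \<and> \<rho> \<le> cc eps \<longrightarrow>
           (\<forall>i::nat. 3 \<le> i \<and> int i \<le> \<lceil>real n / real_of_int (kk p eps n)\<rceil> - 1 \<longrightarrow>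
               TT p eps n \<rho> i \<le> real n powr (- c5 p eps)) \<and>
           (\<forall>i::nat. (i = 2 \<or> int i = \<lceil>real n / real_of_int (kk p eps n)\<rceil>) \<longrightarrow>
               TT p eps n \<rho> i \<le> real n powr (1 - c5 p eps))"
  using eventually_large_n[OF assms] by eventually_elim (rule large_n.TT_bounds)

end
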